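(* Let $G=(V,E)$ be a simple, undirected, unweighted, connected, locally finite graph. Then for every edge $i\sim j$, $$\kappa(i,j)\ \ge\ \mathrm{Ric}(i,j).$$
   Context: $d_v$ is the degree of $v$, $S_1(v)$ its set of neighbours, $d_G$ the shortest-path distance. For an edge $i\sim j$: $\sharp_\Delta(i,j)=S_1(i)\cap S_1(j)$; $\sharp_\square^i(i,j)=\{k\in S_1(i)\setminus (S_1(j)\cup\{j\}) : \exists\, w\in (S_1(k)\cap S_1(j))\setminus (S_1(i)\cup\{i\})\}$ and $\sharp_\square^j(i,j)$ symmetrically; $\gamma_{\max}(i,j)=\max\big\{\max_{k\in\sharp_\square^i}|(S_1(k)\cap S_1(j))\setminus(S_1(i)\cup\{i\})|,\ \max_{w\in\sharp_\square^j}|(S_1(w)\cap S_1(i))\setminus(S_1(j)\cup\{j\})|\big\}$. Balanced Forman curvature: $\mathrm{Ric}(i,j)=0$ if $\min\{d_i,d_j\}=1$; otherwise $$\mathrm{Ric}(i,j)=\frac{2}{d_i}+\frac{2}{d_j}-2+\frac{2|\sharp_\Delta|}{\max\{d_i,d_j\}}+\frac{|\sharp_\Delta|}{\min\{d_i,d_j\}}+\frac{\gamma_{\max}^{-1}}{\max\{d_i,d_j\}}\big(|\sharp_\square^i|+|\sharp_\square^j|\big),$$ where the last term is $0$ if $\sharp_\square^i=\emptyset$. Ollivier curvature: for $\alpha\in[0,1)$ let $\mu_v^\alpha$ be the probability measure with mass $\alpha$ at $v$, $(1-\alpha)/d_v$ at each neighbour of $v$, and $0$ elsewhere; $W_1$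 is the $L^1$-Wasserstein (transportation) distance with respect to $d_G$; $\kappa(i,j)=\lim_{\alpha\to1}\frac{1-W_1(\mu_i^\alpha,\mu_j^\alpha)}{1-\alpha}$. *)

theory Defs
  imports "HOL-Analysis.Analysis"
begin

text \<open>A graph on vertex type 'a (vertex set = UNIV) is given by an adjacency relation E.\<close>

definition simple_graph :: "('a \<Rightarrow> 'a \<Rightarrow> bool) \<Rightarrow> bool" where
  "simple_graph E \<longleftrightarrow> (\<forall>x y. E x y \<longrightarrow> E y x) \<and> (\<forall>x. \<not> E x x)"

definition locally_finite :: "('a \<Rightarrow> 'a \<Rightarrow> bool) \<Rightarrow> bool" where
  "locally_finite E \<longleftrightarrow> (\<forall>x. finite {y. E x y})"

definition connected_graph :: "('a \<Rightarrow> 'a \<Rightarrow> bool) \<Rightarrow> bool" where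
  "connected_graph E \<longleftrightarrow> (\<forall>x y. E\<^sup>*\<^sup>* x y)"

definition nbrs :: "('a \<Rightarrow> 'a \<Rightarrow> bool) \<Rightarrow> 'a \<Rightarrow> 'a set" where
  "nbrs E v = {u. E v u}"

definition deg :: "('a \<Rightarrow> 'a \<Rightarrow> bool) \<Rightarrow> 'a \<Rightarrow> nat" where
  "deg E v = card (nbrs E v)"

definition gdist :: "('a \<Rightarrow> 'a \<Rightarrow> bool) \<Rightarrow> 'a \<Rightarrow> 'a \<Rightarrow> nat" where
  "gdist E x y = (LEAST n. (E ^^ n) x y)"

definition tri :: "('a \<Rightarrow> 'a \<Rightarrow> bool) \<Rightarrow> 'a \<Rightarrow> 'a \<Rightarrow> 'a set" where
  "tri E i j = nbrs E i \<inter> nbrs E j"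

definition sqw :: "('a \<Rightarrow> 'a \<Rightarrow> bool) \<Rightarrow> 'a \<Rightarrow> 'a \<Rightarrow> 'a \<Rightarrow> 'a set" where
  "sqw E i j k = (nbrs E k \<inter> nbrs E j) - (nbrs E i \<union> {i})"

definition sq :: "('a \<Rightarrow> 'a \<Rightarrow> bool) \<Rightarrow> 'a \<Rightarrow> 'a \<Rightarrow> 'a set" where
  "sq E i j = {k \<in> nbrs E i - (nbrs E j \<union> {j}). \<exists>w. w \<in> sqw E i j k}"

definition gamma_max :: "('a \<Rightarrow> 'a \<Rightarrow> bool) \<Rightarrow> 'a \<Rightarrow> 'a \<Rightarrow> nat" where
  "gamma_max E i j = max (Max ((\<lambda>k. card (sqw E i j k)) ` sq E i j))
                         (Max ((\<lambda>w. card (sqw E j i w)) ` sq E j i))"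

definition bfc :: "('a \<Rightarrow> 'a \<Rightarrow> bool) \<Rightarrow> 'a \<Rightarrow> 'a \<Rightarrow> real" where
  "bfc E i j =
    (let di = real (deg E i); dj = real (deg E j) in
     if min di dj = 1 then 0
     else 2 / di + 2 / dj - 2
          + 2 * real (card (tri E i j)) / max di dj
          + real (card (tri E i j)) / min di dj
          + (if sq E i j = {} then 0
             else (inverse (real (gamma_max E i j)) / max di dj)
                  * (real (card (sq E i j)) + real (card (sq E j i)))))"

definition mu :: "('a \<Rightarrow> 'a \<Rightarrow> bool) \<Rightarrow> real \<Rightarrow> 'a \<Rightarrow> 'a \<Rightarrow> real" where
  "mu E \<alpha> v x = (if x = v then \<alpha> else if E v x then (1 - \<alpha>) / real (deg E v) else 0)"

definition couplings :: "'a set \<Rightarrow> ('a \<Rightarrow> real) \<Rightarrow> ('a \<Rightarrow> real) \<Rightarrow> ('a \<Rightarrow> 'a \<Rightarrow> real) set" where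
  "couplings S m1 m2 = {\<pi>. (\<forall>x y. 0 \<le> \<pi> x y) \<and> (\<forall>x y. (x \<notin> S \<or> y \<notin> S) \<longrightarrow> \<pi> x y = 0)
       \<and> (\<forall>x\<in>S. (\<Sum>y\<in>S. \<pi> x y) = m1 x) \<and> (\<forall>y\<in>S. (\<Sum>x\<in>S. \<pi> x y) = m2 y)}"

definition W1 :: "('a \<Rightarrow> 'a \<Rightarrow> bool) \<Rightarrow> ('a \<Rightarrow> real) \<Rightarrow> ('a \<Rightarrow> real) \<Rightarrow> real" where
  "W1 E m1 m2 =
    (let S = {x. m1 x \<noteq> 0} \<union> {x. m2 x \<noteq> 0} in
     Inf ((\<lambda>\<pi>. \<Sum>x\<in>S. \<Sum>y\<in>S. \<pi> x y * real (gdist E x y)) ` couplings S m1 m2))"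

definition ollivier :: "('a \<Rightarrow> 'a \<Rightarrow> bool) \<Rightarrow> 'a \<Rightarrow> 'a \<Rightarrow> real" where
  "ollivier E i j = Lim (at_left 1) (\<lambda>\<alpha>. (1 - W1 E (mu E \<alpha> i) (mu E \<alpha> j)) / (1 - \<alpha>))"

end

theory Submission
  imports Defs
begin

(* The quotient (1 - W1(mu_i^alpha, mu_j^alpha)) / (1 - alpha) is nondecreasing in the laziness
   alpha and bounded by 2, so the Ollivier curvature is its limit and dominates its value at
   alpha = 1/2.  For deg i <= deg j an explicit transport plan between the 1/2-lazy measures costs
   at most 1 - Ric(i,j)/2; the case deg i > deg j follows since both curvatures are symmetric. *)

definition transport_cost :: "('a \<Rightarrow> 'a \<Rightarrow> bool) \<Rightarrow> 'a set \<Rightarrow> ('a \<Rightarrow> 'a \<Rightarrow> real) \<Rightarrow> real" where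
  "transport_cost E S \<pi> = (\<Sum>x\<in>S. \<Sum>y\<in>S. \<pi> x y * real (gdist E x y))"

lemma transport_cost_add:
  "transport_cost E S (\<lambda>x y. \<pi> x y + \<sigma> x y) = transport_cost E S \<pi> + transport_cost E S \<sigma>"
  unfolding transport_cost_def by (simp add: algebra_simps sum.distrib)

lemma transport_cost_scale:
  "transport_cost E S (\<lambda>x y. t * \<pi> x y) = t * transport_cost E S \<pi>"
  unfolding transport_cost_def by (simp add: sum_distrib_left mult.assoc)

lemma transport_cost_nonneg: "\<pi> \<in> couplings S m1 m2 \<Longrightarrow> 0 \<le> transport_cost E S \<pi>"
  unfolding couplings_def transport_cost_def by (auto intro!: sum_nonneg)

lemma transport_cost_le_row_bound:
  assumes "\<pi> \<in> couplings S m1 m2"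
    and "\<And>x y. x \<in> S \<Longrightarrow> y \<in> S \<Longrightarrow> \<pi> x y \<noteq> 0 \<Longrightarrow> real (gdist E x y) \<le> h x"
  shows "transport_cost E S \<pi> \<le> (\<Sum>x\<in>S. m1 x * h x)"
proof -
  have nonneg: "0 \<le> \<pi> x y" for x y using assms(1) unfolding couplings_def by blast
  have "transport_cost E S \<pi> \<le> (\<Sum>x\<in>S. \<Sum>y\<in>S. \<pi> x y * h x)"
    unfolding transport_cost_def
    by (intro sum_mono) (metis assms(2) mult_eq_0_iff mult_left_mono nonneg)
  also have "\<dots> = (\<Sum>x\<in>S. m1 x * h x)"
    using assms(1) unfolding couplings_def by (simp add: sum_distrib_right[symmetric])
  finally show ?thesis .
qed

lemma W1_le_transport_cost:
  assumes "S = {x. m1 x \<noteq> 0} \<union> {x. m2 x \<noteq> 0}" and "\<pi> \<in> couplings S m1 m2"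
  shows "W1 E m1 m2 \<le> transport_cost E S \<pi>"
  unfolding W1_def Let_def assms(1)[symmetric] transport_cost_def[symmetric]
  using assms(2) by (intro cInf_lower bdd_belowI[where m=0]) (auto intro: transport_cost_nonneg)

lemma W1_ge:
  assumes "S = {x. m1 x \<noteq> 0} \<union> {x. m2 x \<noteq> 0}" and "couplings S m1 m2 \<noteq> {}"
    and "\<And>\<pi>. \<pi> \<in> couplings S m1 m2 \<Longrightarrow> L \<le> transport_cost E S \<pi>"
  shows "L \<le> W1 E m1 m2"
  unfolding W1_def Let_def assms(1)[symmetric] transport_cost_def[symmetric]
  using assms(2,3) by (intro cInf_greatest) auto

lemma couplings_add:
  assumes "\<pi> \<in> couplings S m1 m2" and "\<sigma> \<in> couplings S n1 n2"
  shows "(\<lambda>x y. \<pi> x y + \<sigma> x y) \<in> couplings S (\<lambda>x. m1 x + n1 x) (\<lambda>y. m2 y + n2 y)"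
  using assms unfolding couplings_def by (auto simp: sum.distrib)

lemma couplings_scale:
  assumes "\<pi> \<in> couplings S m1 m2" and "0 \<le> t"
  shows "(\<lambda>x y. t * \<pi> x y) \<in> couplings S (\<lambda>x. t * m1 x) (\<lambda>y. t * m2 y)"
  using assms unfolding couplings_def by (auto simp: sum_distrib_left[symmetric])

lemma couplings_swap: "\<pi> \<in> couplings S m1 m2 \<Longrightarrow> (\<lambda>x y. \<pi> y x) \<in> couplings S m2 m1"
  unfolding couplings_def by auto

lemma couplings_of_marginals:
  assumes "\<And>x y. 0 \<le> \<pi> x y" and "\<And>x y. x \<notin> S \<or> y \<notin> S \<Longrightarrow> \<pi> x y = 0"
  shows "\<pi> \<in> couplings S (\<lambda>x. \<Sum>y\<in>S. \<pi> x y) (\<lambda>y. \<Sum>x\<in>S. \<pi> x y)"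
  using assms unfolding couplings_def by auto

lemma couplings_point_mass:
  assumes "finite S" "i \<in> S" "j \<in> S" "0 \<le> c"
  shows "(\<lambda>x y. if x = i \<and> y = j then c else 0)
           \<in> couplings S (\<lambda>x. if x = i then c else 0) (\<lambda>y. if y = j then c else 0)"
  using assms unfolding couplings_def by auto

lemma couplings_diagonal:
  assumes "finite S" and "\<And>x. 0 \<le> h x" and "\<And>x. x \<notin> S \<Longrightarrow> h x = 0"
  shows "(\<lambda>x y. if x = y then h x else 0) \<in> couplings S h h"
  using assms unfolding couplings_def by auto

lemma couplings_product:
  assumes S: "finite S" and nonneg: "\<And>x. 0 \<le> s x" "\<And>y. 0 \<le> r y"
    and vanish: "\<And>x. x \<notin> S \<Longrightarrow> s x = 0" "\<And>y. y \<notin> S \<Longrightarrow> r y = 0"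
    and balanced: "sum s S = sum r S"
  shows "(\<lambda>x y. s x * r y / sum r S) \<in> couplings S s r"
proof (cases "sum r S = 0")
  case True
  then have "\<forall>x\<in>S. s x = 0" "\<forall>y\<in>S. r y = 0"
    using balanced sum_nonneg_eq_0_iff[OF S] nonneg by metis+
  then show ?thesis using nonneg vanish unfolding couplings_def by auto
next
  case False
  have "0 \<le> sum r S" using nonneg by (simp add: sum_nonneg)
  with False show ?thesis using nonneg vanish balanced unfolding couplings_def
    by (auto simp: sum_divide_distrib[symmetric] sum_distrib_left[symmetric]
        sum_distrib_right[symmetric])
qed

lemma gdist_le_relpowp: "(E ^^ n) x y \<Longrightarrow> gdist E x y \<le> n"
  unfolding gdist_def by (rule Least_le)

lemma gdist_edge_le: "E x y \<Longrightarrow> gdist E x y \<le> 1"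
  by (metis gdist_le_relpowp relpowp_1)

lemma gdist_path2_le: "E x z \<Longrightarrow> E z y \<Longrightarrow> gdist E x y \<le> 2"
  by (rule gdist_le_relpowp) (force simp: numeral_2_eq_2)

lemma gdist_path3_le: "E x z \<Longrightarrow> E z w \<Longrightarrow> E w y \<Longrightarrow> gdist E x y \<le> 3"
  by (rule gdist_le_relpowp) (force simp: numeral_3_eq_3)

lemma gdist_refl: "gdist E x x = 0"
  using gdist_le_relpowp[where n = 0 and E = E and x = x and y = x] by simp

lemma mu_lazy_mix:
  assumes "1 - \<beta> = t * (1 - \<alpha>)"
  shows "mu E \<beta> v x = t * mu E \<alpha> v x + (1 - t) * (if x = v then 1 else 0)"
proof -
  have "\<beta> = t * \<alpha> + (1 - t)" using assms by (simp add: algebra_simps)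
  then show ?thesis unfolding mu_def using assms by (auto simp: mult.assoc[symmetric])
qed

lemma mu_nonneg: "0 \<le> \<alpha> \<Longrightarrow> \<alpha> \<le> 1 \<Longrightarrow> 0 \<le> mu E \<alpha> v x"
  unfolding mu_def by auto

locale graph =
  fixes E :: "'a \<Rightarrow> 'a \<Rightarrow> bool"
  assumes simple: "simple_graph E" and locally_finite: "locally_finite E"
    and connected: "connected_graph E"
begin

lemma sym: "E x y \<Longrightarrow> E y x"
  using simple unfolding simple_graph_def by blast

lemma irrefl: "\<not> E x x"
  using simple unfolding simple_graph_def by blast

lemma finite_nbrs: "finite (nbrs E x)"
  using locally_finite unfolding locally_finite_def nbrs_def by blast

lemma deg_pos: "E v w \<Longrightarrow> 0 < deg E v"
  unfolding deg_def using finite_nbrs[of v] by (auto simp: card_gt_0_iff nbrs_def)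

lemma relpowp_sym: "(E ^^ n) x y \<Longrightarrow> (E ^^ n) y x"
proof (induction n arbitrary: y)
  case (Suc n)
  from Suc.prems obtain z where "(E ^^ n) x z" "E z y" by (rule relpowp_Suc_E)
  with Suc.IH sym show ?case by (blast intro: relpowp_Suc_I2)
qed simp

lemma gdist_commute: "gdist E x y = gdist E y x"
proof -
  have "(E ^^ n) x y = (E ^^ n) y x" for n using relpowp_sym by blast
  then show ?thesis unfolding gdist_def by simp
qed

lemma gdist_ge_1: assumes "x \<noteq> y" shows "1 \<le> gdist E x y"
proof -
  have "E\<^sup>*\<^sup>* x y" using connected unfolding connected_graph_def by blast
  then have "\<exists>n. (E ^^ n) x y" by (rule rtranclp_imp_relpowp)
  then have "(E ^^ gdist E x y) x y" unfolding gdist_def by (rule LeastI_ex)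
  with assms show ?thesis by (cases "gdist E x y") auto
qed

lemma W1_commute: "W1 E m1 m2 = W1 E m2 m1"
proof -
  have cost_swap: "transport_cost E S (\<lambda>x y. \<pi> y x) = transport_cost E S \<pi>" for S \<pi>
    unfolding transport_cost_def by (subst sum.swap) (simp add: gdist_commute)
  have subset: "transport_cost E S ` couplings S n1 n2 \<subseteq> transport_cost E S ` couplings S n2 n1"
    for S n1 n2
  proof
    fix c assume "c \<in> transport_cost E S ` couplings S n1 n2"
    then obtain \<pi> where "\<pi> \<in> couplings S n1 n2" "c = transport_cost E S \<pi>" by blast
    then show "c \<in> transport_cost E S ` couplings S n2 n1"
      by (metis couplings_swap cost_swap image_eqI)
  qed
  have "transport_cost E S ` couplings S m1 m2 = transport_cost E S ` couplings S m2 m1" for S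
    by (intro subset_antisym subset)
  then show ?thesis
    unfolding W1_def Let_def transport_cost_def[symmetric] by (simp add: Un_commute)
qed

lemma ollivier_commute: "ollivier E i j = ollivier E j i"
  unfolding ollivier_def by (simp add: W1_commute)

lemma support_mu:
  assumes "0 < \<alpha>" "\<alpha> < 1" "E v w"
  shows "{x. mu E \<alpha> v x \<noteq> 0} = insert v (nbrs E v)"
  using assms deg_pos[OF assms(3)] unfolding mu_def nbrs_def by auto

lemma sum_mu:
  assumes "finite S" "insert v (nbrs E v) \<subseteq> S" "E v w"
  shows "(\<Sum>x\<in>S. mu E \<alpha> v x) = 1"
proof -
  have "(\<Sum>x\<in>S. mu E \<alpha> v x) = mu E \<alpha> v v + (\<Sum>x\<in>nbrs E v. mu E \<alpha> v x)"
    using assms(1,2) finite_nbrs[of v] irrefl[of v]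
    by (subst sum.mono_neutral_right[of S "insert v (nbrs E v)"])
      (auto simp: mu_def nbrs_def)
  also have "\<dots> = \<alpha> + (\<Sum>x\<in>nbrs E v. (1 - \<alpha>) / real (deg E v))"
    by (intro arg_cong2[where f = "(+)"] sum.cong) (auto simp: mu_def nbrs_def irrefl)
  also have "\<dots> = 1" using deg_pos[OF assms(3)] by (simp add: deg_def)
  finally show ?thesis .
qed

lemma transport_cost_ge_mass_excess:
  assumes S: "finite S" and \<pi>: "\<pi> \<in> couplings S m1 m2" and x: "x \<in> S"
  shows "m1 x - m2 x \<le> transport_cost E S \<pi>"
proof -
  have nonneg: "0 \<le> \<pi> u v" for u v using \<pi> unfolding couplings_def by blast
  have row: "(\<Sum>y\<in>S. \<pi> x y) = m1 x" and col: "(\<Sum>u\<in>S. \<pi> u x) = m2 x"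
    using \<pi> x unfolding couplings_def by simp_all
  have "\<pi> x x \<le> (\<Sum>u\<in>S. \<pi> u x)"
    using S x nonneg by (intro member_le_sum) auto
  then have stay: "\<pi> x x \<le> m2 x" unfolding col .
  have "m1 x - \<pi> x x = (\<Sum>y\<in>S - {x}. \<pi> x y)"
    using sum.remove[OF S x, of "\<pi> x"] row by simp
  also have "\<dots> \<le> (\<Sum>y\<in>S - {x}. \<pi> x y * real (gdist E x y))"
  proof (intro sum_mono)
    fix y assume "y \<in> S - {x}"
    then have "1 \<le> real (gdist E x y)" using gdist_ge_1[of x y] by auto
    from mult_left_mono[OF this nonneg]
    show "\<pi> x y \<le> \<pi> x y * real (gdist E x y)" by simp
  qed
  also have "\<dots> \<le> (\<Sum>y\<in>S. \<pi> x y * real (gdist E x y))"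
    using S nonneg by (intro sum_mono2) simp_all
  also have "\<dots> \<le> transport_cost E S \<pi>"
    unfolding transport_cost_def using S x nonneg
    by (intro member_le_sum[of x S] sum_nonneg mult_nonneg_nonneg) simp_all
  finally show ?thesis using stay by linarith
qed

lemma sq_nonempty_commute: "sq E i j \<noteq> {} \<Longrightarrow> sq E j i \<noteq> {}"
proof -
  assume "sq E i j \<noteq> {}"
  then obtain k w where "k \<in> sq E i j" "w \<in> sqw E i j k" unfolding sq_def by blast
  then have "k \<in> sqw E j i w" "w \<in> sq E j i"
    using sym unfolding sq_def sqw_def nbrs_def by auto
  then show ?thesis by blast
qed

lemma bfc_commute: "bfc E i j = bfc E j i"
proof -
  have sq_empty: "(sq E i j = {}) = (sq E j i = {})" using sq_nonempty_commute by blast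
  show ?thesis unfolding bfc_def Let_def tri_def gamma_max_def sq_empty
    by (simp add: Int_commute max.commute min.commute add.commute)
qed

end

lemma Lim_at_left_ge_of_mono_bounded:
  fixes g :: "real \<Rightarrow> real"
  assumes mono: "\<And>x y. a < x \<Longrightarrow> x < y \<Longrightarrow> y < b \<Longrightarrow> g x \<le> g y"
    and bounded: "\<And>x. a < x \<Longrightarrow> x < b \<Longrightarrow> g x \<le> M"
    and x: "a < x" "x < b"
  shows "g x \<le> Lim (at_left b) g"
proof -
  define L where "L = Sup (g ` {a<..<b})"
  have bdd: "bdd_above (g ` {a<..<b})" using bounded by (auto intro!: bdd_aboveI[where M=M])
  have upper: "g y \<le> L" if "a < y" "y < b" for y
    unfolding L_def using that bdd by (intro cSup_upper) auto
  have "(g \<longlongrightarrow> L) (at_left b)"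
  proof (rule order_tendstoI)
    fix c assume "c < L"
    then obtain y where y: "a < y" "y < b" "c < g y"
      using less_cSup_iff[OF _ bdd] x unfolding L_def by fastforce
    show "\<forall>\<^sub>F z in at_left b. c < g z"
      using eventually_at_left_real[OF y(2)]
      by eventually_elim (use y mono in \<open>force\<close>)
  next
    fix c assume "L < c"
    show "\<forall>\<^sub>F z in at_left b. g z < c"
      using eventually_at_left_real[OF less_trans[OF x]]
      by eventually_elim (use upper \<open>L < c\<close> in \<open>force\<close>)
  qed
  then have "Lim (at_left b) g = L" using x by (intro tendsto_Lim) simp_all
  then show ?thesis using upper x by simp
qed

locale graph_edge = graph +
  fixes i j :: 'a
  assumes edge: "E i j"
begin

definition nbhd :: "'a set" where
  "nbhd = nbrs E i \<union> nbrs E j"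

definition excl_i :: "'a set" where
  "excl_i = nbrs E i - (nbrs E j \<union> {j})"

definition excl_j :: "'a set" where
  "excl_j = nbrs E j - (nbrs E i \<union> {i})"

definition curv_quotient :: "real \<Rightarrow> real" where
  "curv_quotient \<alpha> = (1 - W1 E (mu E \<alpha> i) (mu E \<alpha> j)) / (1 - \<alpha>)"

lemma edge': "E j i"
  using sym[OF edge] .

lemma distinct_ends: "i \<noteq> j"
  using edge irrefl by blast

lemma finite_nbhd: "finite nbhd"
  unfolding nbhd_def using finite_nbrs by simp

lemma closed_nbhds_subset: "insert i (nbrs E i) \<subseteq> nbhd" "insert j (nbrs E j) \<subseteq> nbhd"
  unfolding nbhd_def nbrs_def using edge edge' by auto

lemma support_mu_pair:
  assumes "0 < \<alpha>" "\<alpha> < 1"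
  shows "{x. mu E \<alpha> i x \<noteq> 0} \<union> {x. mu E \<alpha> j x \<noteq> 0} = nbhd"
  using support_mu[OF assms edge] support_mu[OF assms edge'] closed_nbhds_subset
  unfolding nbhd_def by auto

lemma W1_mu_le_transport_cost:
  "0 < \<alpha> \<Longrightarrow> \<alpha> < 1 \<Longrightarrow> \<pi> \<in> couplings nbhd (mu E \<alpha> i) (mu E \<alpha> j)
    \<Longrightarrow> W1 E (mu E \<alpha> i) (mu E \<alpha> j) \<le> transport_cost E nbhd \<pi>"
  by (rule W1_le_transport_cost) (simp_all add: support_mu_pair)

lemma W1_mu_ge:
  assumes "0 < \<alpha>" "\<alpha> < 1"
    and "\<And>\<pi>. \<pi> \<in> couplings nbhd (mu E \<alpha> i) (mu E \<alpha> j) \<Longrightarrow> L \<le> transport_cost E nbhd \<pi>"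
  shows "L \<le> W1 E (mu E \<alpha> i) (mu E \<alpha> j)"
proof (rule W1_ge)
  have "(\<lambda>x y. mu E \<alpha> i x * mu E \<alpha> j y / (\<Sum>y\<in>nbhd. mu E \<alpha> j y))
          \<in> couplings nbhd (mu E \<alpha> i) (mu E \<alpha> j)"
    using assms(1,2) support_mu_pair[OF assms(1,2)]
    by (intro couplings_product finite_nbhd)
      (auto simp: mu_nonneg sum_mu[OF finite_nbhd closed_nbhds_subset(1) edge]
        sum_mu[OF finite_nbhd closed_nbhds_subset(2) edge'])
  then show "couplings nbhd (mu E \<alpha> i) (mu E \<alpha> j) \<noteq> {}" by blast
qed (use assms support_mu_pair in auto)

lemma curv_quotient_le_2:
  assumes "0 < \<alpha>" "\<alpha> < 1"
  shows "curv_quotient \<alpha> \<le> 2"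
proof -
  have "2 * \<alpha> - 1 \<le> W1 E (mu E \<alpha> i) (mu E \<alpha> j)"
  proof (rule W1_mu_ge[OF assms])
    fix \<pi> assume \<pi>: "\<pi> \<in> couplings nbhd (mu E \<alpha> i) (mu E \<alpha> j)"
    have "1 \<le> real (deg E j)" using deg_pos[OF edge'] by linarith
    then have "(1 - \<alpha>) / real (deg E j) \<le> 1 - \<alpha>"
      using assms divide_left_mono[of 1 "real (deg E j)" "1 - \<alpha>"] by simp
    then have "2 * \<alpha> - 1 \<le> mu E \<alpha> i i - mu E \<alpha> j i"
      using edge' distinct_ends by (simp add: mu_def)
    also have "\<dots> \<le> transport_cost E nbhd \<pi>"
      using \<pi> closed_nbhds_subset by (intro transport_cost_ge_mass_excess finite_nbhd) auto
    finally show "2 * \<alpha> - 1 \<le> transport_cost E nbhd \<pi>" .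
  qed
  then show ?thesis using assms unfolding curv_quotient_def by (simp add: field_simps)
qed

text \<open>Raising the laziness from \<open>\<alpha>\<close> to \<open>\<beta>\<close> mixes each measure, with weight
  \<open>t = (1 - \<beta>) / (1 - \<alpha>)\<close>, with the Dirac mass at its centre; moving the extra mass \<open>1 - t\<close>
  along the edge gives \<open>W\<^sub>1\<close> at \<open>\<beta>\<close> at most \<open>t\<close> times \<open>W\<^sub>1\<close> at \<open>\<alpha>\<close> plus \<open>1 - t\<close>.\<close>

lemma curv_quotient_mono:
  assumes "0 < \<alpha>" "\<alpha> < \<beta>" "\<beta> < 1"
  shows "curv_quotient \<alpha> \<le> curv_quotient \<beta>"
proof -
  define t where "t = (1 - \<beta>) / (1 - \<alpha>)"
  have t: "0 < t" "t < 1" "1 - \<beta> = t * (1 - \<alpha>)"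
    using assms unfolding t_def by (auto simp: field_simps)
  let ?W = "\<lambda>\<gamma>. W1 E (mu E \<gamma> i) (mu E \<gamma> j)"
  have "(?W \<beta> - (1 - t)) / t \<le> ?W \<alpha>"
  proof (rule W1_mu_ge)
    fix \<pi> assume \<pi>: "\<pi> \<in> couplings nbhd (mu E \<alpha> i) (mu E \<alpha> j)"
    let ?step = "\<lambda>x y. if x = i \<and> y = j then 1 - t else 0"
    have step: "?step \<in> couplings nbhd (\<lambda>x. if x = i then 1 - t else 0) (\<lambda>y. if y = j then 1 - t else 0)"
      using closed_nbhds_subset t by (intro couplings_point_mass finite_nbhd) auto
    have mix: "(\<lambda>x. t * mu E \<alpha> v x + (if x = v then 1 - t else 0)) = mu E \<beta> v" for v
      by (simp add: fun_eq_iff mu_lazy_mix[OF t(3)])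
    have "(\<lambda>x y. t * \<pi> x y + ?step x y) \<in> couplings nbhd (mu E \<beta> i) (mu E \<beta> j)"
      using couplings_add[OF couplings_scale[OF \<pi> less_imp_le[OF t(1)]] step] unfolding mix .
    then have "?W \<beta> \<le> transport_cost E nbhd (\<lambda>x y. t * \<pi> x y + ?step x y)"
      using assms by (intro W1_mu_le_transport_cost) auto
    also have "\<dots> \<le> t * transport_cost E nbhd \<pi> + (1 - t)"
    proof -
      have "transport_cost E nbhd ?step \<le> (\<Sum>x\<in>nbhd. (if x = i then 1 - t else 0) * 1)"
        using gdist_edge_le[of E i j] edge
        by (intro transport_cost_le_row_bound[OF step]) (simp split: if_splits)
      then show ?thesis
        using closed_nbhds_subset by (simp add: transport_cost_add transport_cost_scale finite_nbhd)
    qed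
    finally show "(?W \<beta> - (1 - t)) / t \<le> transport_cost E nbhd \<pi>"
      using t by (simp add: field_simps)
  qed (use assms in auto)
  then have "t * (1 - ?W \<alpha>) \<le> 1 - ?W \<beta>" using t by (simp add: field_simps)
  moreover have "curv_quotient \<alpha> = t * (1 - ?W \<alpha>) / (1 - \<beta>)"
  proof -
    have "1 - \<alpha> \<noteq> 0" "1 - \<beta> \<noteq> 0" using assms by auto
    then show ?thesis unfolding curv_quotient_def t_def by simp
  qed
  ultimately show ?thesis
    unfolding curv_quotient_def[of \<beta>] using assms by (simp add: divide_right_mono)
qed

text \<open>Monotonicity and the bound make the limit in the definition of \<open>ollivier\<close> exist;
  otherwise \<open>Lim\<close> would be an unspecified value.\<close>

lemma curv_quotient_le_ollivier:
  assumes "0 < \<alpha>" "\<alpha> < 1"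
  shows "curv_quotient \<alpha> \<le> ollivier E i j"
  unfolding ollivier_def curv_quotient_def[abs_def, symmetric]
  using curv_quotient_mono curv_quotient_le_2 assms by (rule Lim_at_left_ge_of_mono_bounded)

lemma excl_i_iff: "x \<in> excl_i \<longleftrightarrow> E i x \<and> \<not> E j x \<and> x \<noteq> j"
  and excl_j_iff: "x \<in> excl_j \<longleftrightarrow> E j x \<and> \<not> E i x \<and> x \<noteq> i"
  and tri_iff: "x \<in> tri E i j \<longleftrightarrow> E i x \<and> E j x"
  unfolding excl_i_def excl_j_def tri_def nbrs_def by auto

lemma nbrs_i_split: "nbrs E i = insert j (tri E i j \<union> excl_i)"
  unfolding nbrs_def using edge excl_i_iff tri_iff by auto

lemma nbhd_split: "nbhd = insert i (insert j (tri E i j \<union> excl_i \<union> excl_j))"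
  unfolding nbhd_def nbrs_def using edge edge' excl_i_iff excl_j_iff tri_iff by auto

lemma finite_parts: "finite (tri E i j)" "finite excl_i" "finite excl_j"
  using finite_nbhd unfolding nbhd_split by auto

lemma deg_i_split: "deg E i = 1 + card (tri E i j) + card excl_i"
proof -
  have "j \<notin> tri E i j \<union> excl_i" "tri E i j \<inter> excl_i = {}"
    using irrefl excl_i_iff tri_iff by auto
  then show ?thesis
    unfolding deg_def nbrs_i_split using finite_parts by (simp add: card_Un_disjoint)
qed

lemma sum_nbhd_split:
  "(\<Sum>x\<in>nbhd. h x) = h i + h j + sum h (tri E i j) + sum h excl_i + sum h excl_j"
proof -
  have disjoint: "i \<noteq> j" "i \<notin> tri E i j \<union> excl_i \<union> excl_j" "j \<notin> tri E i j \<union> excl_i \<union> excl_j"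
    "tri E i j \<inter> excl_i = {}" "(tri E i j \<union> excl_i) \<inter> excl_j = {}"
    using distinct_ends irrefl excl_i_iff excl_j_iff tri_iff by auto
  then show ?thesis
    unfolding nbhd_split using finite_parts by (simp add: sum.union_disjoint add.assoc)
qed

lemma sqw_i_eq: "x \<in> excl_i \<Longrightarrow> sqw E i j x = {y \<in> excl_j. E x y}"
  and sqw_j_eq: "y \<in> excl_j \<Longrightarrow> sqw E j i y = {x \<in> excl_i. E x y}"
  unfolding sqw_def nbrs_def using excl_i_iff excl_j_iff sym by auto

lemma sq_i_eq: "sq E i j = {x \<in> excl_i. sqw E i j x \<noteq> {}}"
  and sq_j_eq: "sq E j i = {y \<in> excl_j. sqw E j i y \<noteq> {}}"
  unfolding sq_def excl_i_def excl_j_def by auto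

lemma card_sqw_le_gamma_max:
  "x \<in> sq E i j \<Longrightarrow> card (sqw E i j x) \<le> gamma_max E i j"
  "y \<in> sq E j i \<Longrightarrow> card (sqw E j i y) \<le> gamma_max E i j"
proof -
  have "finite (sq E i j)" "finite (sq E j i)"
    unfolding sq_i_eq sq_j_eq using finite_parts by auto
  then show "x \<in> sq E i j \<Longrightarrow> card (sqw E i j x) \<le> gamma_max E i j"
    "y \<in> sq E j i \<Longrightarrow> card (sqw E j i y) \<le> gamma_max E i j"
    unfolding gamma_max_def by (simp_all add: le_max_iff_disj)
qed

lemma gdist_to_excl_j_le:
  assumes "y \<in> excl_j" and "x = i \<or> x \<in> tri E i j \<or> x \<in> excl_i"
  shows "real (gdist E x y) \<le> (if x \<in> excl_i then 3 else 2)"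
proof -
  have jy: "E j y" using assms(1) excl_j_iff by blast
  from assms(2) consider "x = i" | "x \<in> tri E i j" | "x \<in> excl_i" by blast
  then show ?thesis
  proof cases
    case 1
    then show ?thesis using gdist_path2_le[of E i j y] edge jy excl_i_iff irrefl by auto
  next
    case 2
    then have "E x j" "x \<notin> excl_i" using tri_iff excl_i_iff sym by auto
    then show ?thesis using gdist_path2_le[of E x j y] jy by auto
  next
    case 3
    then have "E x i" using excl_i_iff sym by blast
    then show ?thesis using gdist_path3_le[of E x i j y] edge jy 3 by auto
  qed
qed

end

text \<open>The transport plan at laziness \<open>1/2\<close>: mass common to both measures stays, the excess
  \<open>(1 - 1/d\<^sub>i)/2\<close> at \<open>i\<close> crosses the edge, every edge of a 4-cycle between the exclusive
  neighbourhoods carries \<open>flow_weight\<close>, and the remaining surplus (at \<open>i\<close>, on triangles and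
  on \<open>excl_i\<close>) is spread proportionally over the remaining deficit on \<open>excl_j\<close>, at distance at
  most \<open>2\<close>, resp. \<open>3\<close>.\<close>

locale graph_edge_deg_le = graph_edge +
  assumes deg_le: "deg E i \<le> deg E j"
begin

definition step_i :: real where
  "step_i = 1 / real (deg E i)"

definition step_j :: real where
  "step_j = 1 / real (deg E j)"

definition flow_weight :: real where
  "flow_weight = inverse (real (gamma_max E i j)) / (2 * real (deg E j))"

definition flow :: "'a \<Rightarrow> 'a \<Rightarrow> real" where
  "flow x y = (if x \<in> excl_i \<and> y \<in> excl_j \<and> E x y then flow_weight else 0)"

definition outflow :: "'a \<Rightarrow> real" where
  "outflow x = (\<Sum>y\<in>nbhd. flow x y)"

definition inflow :: "'a \<Rightarrow> real" where
  "inflow y = (\<Sum>x\<in>nbhd. flow x y)"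

definition total_flow :: real where
  "total_flow = (\<Sum>x\<in>nbhd. outflow x)"

definition stay :: "'a \<Rightarrow> real" where
  "stay x = min (mu E (1/2) i x) (mu E (1/2) j x)"

definition edge_mass :: real where
  "edge_mass = (1 - step_i) / 2"

definition surplus :: "'a \<Rightarrow> real" where
  "surplus x = mu E (1/2) i x - stay x - (if x = i then edge_mass else 0) - outflow x"

definition deficit :: "'a \<Rightarrow> real" where
  "deficit y = mu E (1/2) j y - stay y - (if y = j then edge_mass else 0) - inflow y"

definition plan :: "'a \<Rightarrow> 'a \<Rightarrow> real" where
  "plan x y = (if x = y then stay x else 0) + (if x = i \<and> y = j then edge_mass else 0)
     + flow x y + surplus x * deficit y / sum deficit nbhd"

lemma step_bounds: "0 < step_j" "step_j \<le> step_i" "step_i \<le> 1"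
  using deg_pos[OF edge] deg_pos[OF edge'] deg_le
  unfolding step_i_def step_j_def by (auto simp: frac_le)

lemma mu_half_i: "mu E (1/2) i x = (if x = i then 1/2 else if E i x then step_i / 2 else 0)"
  and mu_half_j: "mu E (1/2) j x = (if x = j then 1/2 else if E j x then step_j / 2 else 0)"
  unfolding mu_def step_i_def step_j_def by simp_all

lemma flow_nonneg: "0 \<le> flow x y"
  unfolding flow_def flow_weight_def by simp

lemma outflow_eq: "outflow x = (if x \<in> excl_i then flow_weight * real (card (sqw E i j x)) else 0)"
proof -
  have "outflow x = (\<Sum>y\<in>{y \<in> nbhd. x \<in> excl_i \<and> y \<in> excl_j \<and> E x y}. flow_weight)"
    unfolding outflow_def flow_def by (subst sum.inter_filter[OF finite_nbhd, symmetric]) simp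
  moreover have "{y \<in> nbhd. x \<in> excl_i \<and> y \<in> excl_j \<and> E x y} = (if x \<in> excl_i then sqw E i j x else {})"
    using sqw_i_eq nbhd_split by auto
  ultimately show ?thesis by simp
qed

lemma inflow_eq: "inflow y = (if y \<in> excl_j then flow_weight * real (card (sqw E j i y)) else 0)"
proof -
  have "inflow y = (\<Sum>x\<in>{x \<in> nbhd. x \<in> excl_i \<and> y \<in> excl_j \<and> E x y}. flow_weight)"
    unfolding inflow_def flow_def by (subst sum.inter_filter[OF finite_nbhd, symmetric]) simp
  moreover have "{x \<in> nbhd. x \<in> excl_i \<and> y \<in> excl_j \<and> E x y} = (if y \<in> excl_j then sqw E j i y else {})"
    using sqw_j_eq nbhd_split by auto
  ultimately show ?thesis by simp
qed

lemma flow_weight_card_le: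
  assumes "k \<le> gamma_max E i j"
  shows "flow_weight * real k \<le> step_j / 2"
proof (cases "k = 0")
  case False
  then have "inverse (real (gamma_max E i j)) * real k \<le> 1"
    using assms by (simp add: field_simps)
  then show ?thesis
    using step_bounds(1) unfolding flow_weight_def step_j_def
    by (simp add: field_simps)
qed (use step_bounds in simp)

lemma outflow_le: "outflow x \<le> step_j / 2"
proof (cases "x \<in> excl_i \<and> sqw E i j x \<noteq> {}")
  case True
  then have "x \<in> sq E i j" unfolding sq_i_eq by blast
  then show ?thesis
    unfolding outflow_eq using card_sqw_le_gamma_max(1) flow_weight_card_le step_bounds by auto
qed (use step_bounds in \<open>auto simp: outflow_eq\<close>)

lemma inflow_le: "inflow y \<le> step_j / 2"
proof (cases "y \<in> excl_j \<and> sqw E j i y \<noteq> {}")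
  case True
  then have "y \<in> sq E j i" unfolding sq_j_eq by blast
  then show ?thesis
    unfolding inflow_eq using card_sqw_le_gamma_max(2) flow_weight_card_le step_bounds by auto
qed (use step_bounds in \<open>auto simp: inflow_eq\<close>)

lemma surplus_values:
  "surplus i = (step_i - step_j) / 2"
  "x \<in> tri E i j \<Longrightarrow> surplus x = (step_i - step_j) / 2"
  "x \<in> excl_i \<Longrightarrow> surplus x = step_i / 2 - outflow x"
  "x \<noteq> i \<Longrightarrow> x \<notin> tri E i j \<Longrightarrow> x \<notin> excl_i \<Longrightarrow> surplus x = 0"
proof -
  note defs = surplus_def stay_def edge_mass_def mu_half_i mu_half_j outflow_eq
  show "surplus i = (step_i - step_j) / 2"
    using edge' distinct_ends irrefl step_bounds excl_i_iff by (simp add: defs field_simps)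
  show "surplus x = (step_i - step_j) / 2" if "x \<in> tri E i j"
  proof -
    have "E i x" "E j x" "x \<noteq> i" "x \<noteq> j" "x \<notin> excl_i"
      using that tri_iff excl_i_iff irrefl by auto
    then show ?thesis using step_bounds by (simp add: defs)
  qed
  show "surplus x = step_i / 2 - outflow x" if "x \<in> excl_i"
  proof -
    have "E i x" "\<not> E j x" "x \<noteq> i" "x \<noteq> j"
      using that excl_i_iff irrefl by auto
    then show ?thesis using step_bounds by (simp add: surplus_def stay_def mu_half_i mu_half_j)
  qed
  show "surplus x = 0" if "x \<noteq> i" "x \<notin> tri E i j" "x \<notin> excl_i"
  proof (cases "x = j")
    case True
    then show ?thesis using that edge distinct_ends irrefl step_bounds by (simp add: defs)
  next
    case False
    then have "\<not> E i x" using that tri_iff excl_i_iff by auto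
    then show ?thesis using that False step_bounds by (simp add: defs)
  qed
qed

lemma deficit_eq: "deficit y = (if y \<in> excl_j then step_j / 2 - inflow y else 0)"
proof -
  consider "y = i" | "y = j" | "y \<in> tri E i j" | "y \<in> excl_j" | "y \<noteq> i" "y \<noteq> j" "\<not> E j y"
    using tri_iff excl_j_iff by blast
  then show ?thesis
  proof cases
    case 1
    then show ?thesis using edge distinct_ends irrefl step_bounds excl_j_iff
      by (simp add: deficit_def stay_def mu_half_i mu_half_j inflow_eq)
  next
    case 2
    then show ?thesis using edge distinct_ends irrefl step_bounds excl_j_iff
      by (simp add: deficit_def stay_def edge_mass_def mu_half_i mu_half_j inflow_eq field_simps)
  next
    case 3
    then have "E i y" "E j y" "y \<noteq> i" "y \<noteq> j" "y \<notin> excl_j"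
      using tri_iff excl_j_iff irrefl by auto
    then show ?thesis using step_bounds
      by (simp add: deficit_def stay_def mu_half_i mu_half_j inflow_eq)
  next
    case 4
    then have "\<not> E i y" "E j y" "y \<noteq> i" "y \<noteq> j"
      using excl_j_iff irrefl by auto
    then show ?thesis using 4 step_bounds by (simp add: deficit_def stay_def mu_half_i mu_half_j)
  next
    case 5
    then show ?thesis using excl_j_iff step_bounds
      by (simp add: deficit_def stay_def mu_half_i mu_half_j inflow_eq)
  qed
qed

lemma surplus_nonneg: "0 \<le> surplus x"
  using surplus_values(1) surplus_values(2-4)[of x] outflow_le[of x] step_bounds
  by (cases "x = i"; cases "x \<in> tri E i j"; cases "x \<in> excl_i") auto

lemma deficit_nonneg: "0 \<le> deficit y"
  using inflow_le[of y] unfolding deficit_eq by simp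

lemma surplus_vanishes: "x \<notin> nbhd \<Longrightarrow> surplus x = 0"
  using surplus_values(4) unfolding nbhd_split by blast

lemma deficit_vanishes: "y \<notin> nbhd \<Longrightarrow> deficit y = 0"
  unfolding deficit_eq nbhd_split by auto

lemma stay_nonneg: "0 \<le> stay x"
  unfolding stay_def by (simp add: mu_nonneg)

lemma stay_vanishes: "x \<notin> nbhd \<Longrightarrow> stay x = 0"
  using closed_nbhds_subset unfolding stay_def mu_half_i mu_half_j nbrs_def by auto

lemma flow_vanishes: "x \<notin> nbhd \<or> y \<notin> nbhd \<Longrightarrow> flow x y = 0"
  unfolding flow_def nbhd_split by auto

lemma sum_inflow_eq_total_flow: "(\<Sum>y\<in>nbhd. inflow y) = total_flow"
  unfolding inflow_def total_flow_def outflow_def by (rule sum.swap)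

text \<open>Both measures have total mass \<open>1\<close>, so what is left of them after the common mass, the
  edge transport and the square flows is balanced.\<close>

lemma sum_surplus_eq_sum_deficit: "sum surplus nbhd = sum deficit nbhd"
proof -
  have edge_term: "(\<Sum>x\<in>nbhd. if x = v then edge_mass else 0) = edge_mass" if "v \<in> nbhd" for v
    using that finite_nbhd by simp
  have "sum surplus nbhd = 1 - sum stay nbhd - edge_mass - total_flow"
    using edge_term closed_nbhds_subset sum_mu[OF finite_nbhd closed_nbhds_subset(1) edge]
    unfolding surplus_def total_flow_def by (simp add: sum_subtractf)
  also have "\<dots> = sum deficit nbhd"
    using edge_term closed_nbhds_subset sum_mu[OF finite_nbhd closed_nbhds_subset(2) edge']
    unfolding deficit_def sum_inflow_eq_total_flow[symmetric] by (simp add: sum_subtractf)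
  finally show ?thesis .
qed

lemma stay_coupling: "(\<lambda>x y. if x = y then stay x else 0) \<in> couplings nbhd stay stay"
  using stay_nonneg stay_vanishes by (intro couplings_diagonal finite_nbhd)

lemma edge_coupling:
  "(\<lambda>x y. if x = i \<and> y = j then edge_mass else 0)
     \<in> couplings nbhd (\<lambda>x. if x = i then edge_mass else 0) (\<lambda>y. if y = j then edge_mass else 0)"
  using closed_nbhds_subset step_bounds
  by (intro couplings_point_mass finite_nbhd) (auto simp: edge_mass_def)

lemma flow_coupling: "flow \<in> couplings nbhd outflow inflow"
  unfolding outflow_def[abs_def] inflow_def[abs_def]
  using flow_nonneg flow_vanishes by (rule couplings_of_marginals)

lemma rest_coupling:
  "(\<lambda>x y. surplus x * deficit y / sum deficit nbhd) \<in> couplings nbhd surplus deficit"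
  using surplus_nonneg deficit_nonneg surplus_vanishes deficit_vanishes sum_surplus_eq_sum_deficit
  by (intro couplings_product finite_nbhd)

lemma plan_coupling: "plan \<in> couplings nbhd (mu E (1/2) i) (mu E (1/2) j)"
proof -
  have "(\<lambda>x. stay x + (if x = i then edge_mass else 0) + outflow x + surplus x) = mu E (1/2) i"
    "(\<lambda>y. stay y + (if y = j then edge_mass else 0) + inflow y + deficit y) = mu E (1/2) j"
    unfolding surplus_def deficit_def by auto
  then show ?thesis
    unfolding plan_def[abs_def]
    using couplings_add[OF couplings_add[OF couplings_add[OF stay_coupling edge_coupling]
          flow_coupling] rest_coupling]
    by simp
qed

lemma plan_cost_le:
  "transport_cost E nbhd plan
     \<le> edge_mass + total_flow + (\<Sum>x\<in>nbhd. surplus x * (if x \<in> excl_i then 3 else 2))"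
proof -
  have "transport_cost E nbhd (\<lambda>x y. if x = y then stay x else 0) \<le> (\<Sum>x\<in>nbhd. stay x * 0)"
    by (rule transport_cost_le_row_bound[OF stay_coupling]) (simp add: gdist_refl split: if_splits)
  moreover have "transport_cost E nbhd (\<lambda>x y. if x = i \<and> y = j then edge_mass else 0)
      \<le> (\<Sum>x\<in>nbhd. (if x = i then edge_mass else 0) * 1)"
    using gdist_edge_le[of E i j] edge
    by (intro transport_cost_le_row_bound[OF edge_coupling]) (simp split: if_splits)
  moreover have "transport_cost E nbhd flow \<le> (\<Sum>x\<in>nbhd. outflow x * 1)"
    using gdist_edge_le[of E]
    by (intro transport_cost_le_row_bound[OF flow_coupling]) (simp add: flow_def split: if_splits)
  moreover have "transport_cost E nbhd (\<lambda>x y. surplus x * deficit y / sum deficit nbhd)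
      \<le> (\<Sum>x\<in>nbhd. surplus x * (if x \<in> excl_i then 3 else 2))"
  proof (rule transport_cost_le_row_bound[OF rest_coupling])
    fix x y assume "surplus x * deficit y / sum deficit nbhd \<noteq> 0"
    then have "surplus x \<noteq> 0" "deficit y \<noteq> 0" by auto
    then have "y \<in> excl_j" "x = i \<or> x \<in> tri E i j \<or> x \<in> excl_i"
      using surplus_values(4)[of x] deficit_eq[of y] by (auto split: if_splits)
    then show "real (gdist E x y) \<le> (if x \<in> excl_i then 3 else 2)"
      by (rule gdist_to_excl_j_le)
  qed
  ultimately show ?thesis
    unfolding plan_def[abs_def] transport_cost_add total_flow_def
    using closed_nbhds_subset finite_nbhd by simp
qed

lemma total_flow_nonneg: "0 \<le> total_flow"
  unfolding total_flow_def outflow_def using flow_nonneg by (simp add: sum_nonneg)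

lemma total_flow_eq: "total_flow = sum outflow excl_i"
  unfolding total_flow_def using nbhd_split
  by (intro sum.mono_neutral_right finite_nbhd) (auto simp: outflow_eq)

lemma sq_flow_le_total_flow:
  "flow_weight * real (card (sq E i j)) \<le> total_flow"
  "flow_weight * real (card (sq E j i)) \<le> total_flow"
proof -
  have w: "0 \<le> flow_weight" unfolding flow_weight_def by simp
  have "flow_weight \<le> outflow x" if "x \<in> sq E i j" for x
  proof -
    have "x \<in> excl_i" "sqw E i j x \<noteq> {}" using that unfolding sq_i_eq by auto
    moreover from this have "finite (sqw E i j x)" using sqw_i_eq finite_parts by simp
    ultimately have "1 \<le> real (card (sqw E i j x))" by (simp add: Suc_le_eq card_gt_0_iff)
    from mult_left_mono[OF this w] \<open>x \<in> excl_i\<close> show ?thesis by (simp add: outflow_eq)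
  qed
  then have "flow_weight * real (card (sq E i j)) \<le> sum outflow (sq E i j)"
    using sum_mono[of "sq E i j" "\<lambda>_. flow_weight" outflow] by (simp add: mult.commute)
  also have "\<dots> \<le> total_flow"
    unfolding total_flow_def using sq_i_eq nbhd_split outflow_le w
    by (intro sum_mono2 finite_nbhd) (auto simp: outflow_eq)
  finally show "flow_weight * real (card (sq E i j)) \<le> total_flow" .
  have "flow_weight \<le> inflow y" if "y \<in> sq E j i" for y
  proof -
    have "y \<in> excl_j" "sqw E j i y \<noteq> {}" using that unfolding sq_j_eq by auto
    moreover from this have "finite (sqw E j i y)" using sqw_j_eq finite_parts by simp
    ultimately have "1 \<le> real (card (sqw E j i y))" by (simp add: Suc_le_eq card_gt_0_iff)
    from mult_left_mono[OF this w] \<open>y \<in> excl_j\<close> show ?thesis by (simp add: inflow_eq)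
  qed
  then have "flow_weight * real (card (sq E j i)) \<le> sum inflow (sq E j i)"
    using sum_mono[of "sq E j i" "\<lambda>_. flow_weight" inflow] by (simp add: mult.commute)
  also have "\<dots> \<le> total_flow"
    unfolding sum_inflow_eq_total_flow[symmetric] using sq_j_eq nbhd_split w
    by (intro sum_mono2 finite_nbhd) (auto simp: inflow_eq)
  finally show "flow_weight * real (card (sq E j i)) \<le> total_flow" .
qed

lemma weighted_surplus_eq:
  "(\<Sum>x\<in>nbhd. surplus x * (if x \<in> excl_i then 3 else 2))
     = (step_i - step_j) * (1 + real (card (tri E i j)))
       + 3 * (step_i * real (card excl_i) / 2 - total_flow)"
proof -
  have excl: "i \<notin> excl_i" "j \<notin> excl_i" "j \<notin> tri E i j" "x \<in> tri E i j \<Longrightarrow> x \<notin> excl_i" for x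
    using excl_i_iff tri_iff irrefl by auto
  have "(\<Sum>x\<in>tri E i j. surplus x * (if x \<in> excl_i then 3 else 2))
      = (\<Sum>x\<in>tri E i j. step_i - step_j)"
    using excl surplus_values(2) by (intro sum.cong) auto
  moreover have "(\<Sum>x\<in>excl_i. surplus x * (if x \<in> excl_i then 3 else 2))
      = (\<Sum>x\<in>excl_i. 3 * (step_i / 2) - 3 * outflow x)"
    using surplus_values(3) by (intro sum.cong) auto
  moreover have "(\<Sum>x\<in>excl_j. surplus x * (if x \<in> excl_i then 3 else 2)) = 0"
    using surplus_values(4) excl_i_iff excl_j_iff tri_iff by (intro sum.neutral) auto
  ultimately show ?thesis
    unfolding sum_nbhd_split total_flow_eq
    using excl surplus_values(1) surplus_values(4)[of j] distinct_ends
    by (simp add: sum_subtractf sum_distrib_left[symmetric] algebra_simps)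
qed

lemma curv_quotient_half_ge:
  "2 * step_i + 2 * step_j - 2 + step_i * real (card (tri E i j))
     + 2 * step_j * real (card (tri E i j)) + 4 * total_flow \<le> curv_quotient (1/2)"
proof -
  define t where "t = real (card (tri E i j))"
  let ?W = "W1 E (mu E (1/2) i) (mu E (1/2) j)"
  have "step_i * real (deg E i) = 1" using deg_pos[OF edge] unfolding step_i_def by simp
  then have excl_mass: "step_i * real (card excl_i) = 1 - step_i - step_i * t"
    unfolding deg_i_split t_def by (simp add: algebra_simps)
  have "?W \<le> transport_cost E nbhd plan"
    using plan_coupling by (intro W1_mu_le_transport_cost) auto
  also have "\<dots> \<le> edge_mass + total_flow + (step_i - step_j) * (1 + t)
      + 3 * (step_i * real (card excl_i) / 2 - total_flow)"
    using plan_cost_le unfolding weighted_surplus_eq t_def by simp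
  also have "\<dots> = 2 - step_i - step_j - step_i * t / 2 - step_j * t - 2 * total_flow"
    unfolding edge_mass_def excl_mass by (simp add: field_simps)
  finally have "?W \<le> 2 - step_i - step_j - step_i * t / 2 - step_j * t - 2 * total_flow" .
  moreover have "curv_quotient (1/2) = 2 - 2 * ?W" unfolding curv_quotient_def by simp
  ultimately show ?thesis unfolding t_def by linarith
qed

lemma square_term_le:
  "(if sq E i j = {} then 0
    else inverse (real (gamma_max E i j)) / real (deg E j)
         * (real (card (sq E i j)) + real (card (sq E j i)))) \<le> 4 * total_flow"
proof -
  have "inverse (real (gamma_max E i j)) / real (deg E j) = 2 * flow_weight"
    unfolding flow_weight_def by simp
  then show ?thesis using sq_flow_le_total_flow total_flow_nonneg by (simp add: algebra_simps)
qed

lemma bfc_le_curv_quotient_half: "bfc E i j \<le> curv_quotient (1/2)"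
proof (cases "deg E i = 1")
  case True
  then have "card (tri E i j) = 0" "step_i = 1" using deg_i_split unfolding step_i_def by auto
  then have "0 \<le> curv_quotient (1/2)"
    using curv_quotient_half_ge step_bounds total_flow_nonneg by auto
  then show ?thesis using True deg_le unfolding bfc_def Let_def by simp
next
  case False
  then have "bfc E i j = 2 * step_i + 2 * step_j - 2 + 2 * step_j * real (card (tri E i j))
      + step_i * real (card (tri E i j))
      + (if sq E i j = {} then 0
         else inverse (real (gamma_max E i j)) / real (deg E j)
              * (real (card (sq E i j)) + real (card (sq E j i))))"
    using deg_le deg_pos[OF edge] unfolding bfc_def Let_def step_i_def step_j_def
    by (simp add: max_def min_def)
  then show ?thesis using curv_quotient_half_ge square_term_le by linarith
qed

lemma bfc_le_ollivier: "bfc E i j \<le> ollivier E i j"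
  using bfc_le_curv_quotient_half curv_quotient_le_ollivier[of "1/2"] by simp

end

theorem theorem2:
  fixes E :: "'a \<Rightarrow> 'a \<Rightarrow> bool" and i j :: 'a
  assumes "simple_graph E" and "locally_finite E" and "connected_graph E"
    and "E i j"
  shows "ollivier E i j \<ge> bfc E i j"
proof -
  have graph: "graph E" using assms(1-3) by (rule graph.intro)
  have ordered: "bfc E u v \<le> ollivier E u v" if "E u v" "deg E u \<le> deg E v" for u v
    using graph that
    by (intro graph_edge_deg_le.bfc_le_ollivier graph_edge_deg_le.intro graph_edge.intro
        graph_edge_axioms.intro graph_edge_deg_le_axioms.intro)
  show ?thesis
  proof (cases "deg E i \<le> deg E j")
    case False
    then have "bfc E j i \<le> ollivier E j i" using ordered graph.sym[OF graph] assms(4) by simp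
    then show ?thesis by (simp add: graph.bfc_commute[OF graph] graph.ollivier_commute[OF graph])
  qed (use ordered assms(4) in simp)
qed

end
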